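(* Let $\widetilde\Delta^{m-1}$ be the last matrix produced by the Row Cancellation Algorithm applied to a connection matrix $\Delta\in\mathbb F^{m\times m}$. Then $\widetilde\Delta^{m-1}_{\cdot j}\,\widetilde\Delta^{m-1}_{j\cdot}=0$ (outer product) for every $j$; i.e. if the $j$-th column of $\widetilde\Delta^{m-1}$ is nonzero then its $j$-th row is zero.
   Context: Throughout, $\mathbb F$ is a field and $m\ge1$. $A_{i\cdot}$, $A_{\cdot j}$ are the $i$-th row and $j$-th column of $A$. $U^{pq}$ is the $m\times m$ matrix whose only nonzero entry is a $1$ in position $(p,q)$. Superscripts on matrices are indices, not powers. A connection matrix (over $\mathbb F$) is a matrix $\Delta\in\mathbb F^{m\times m}$ together with a partition $\{1,\dots,m\}=J_0\sqcup\cdots\sqcup J_b$ (the column/row partition; the $J_k$ need not consist of consecutive integers) such that $\Delta$ is upper triangular, $\Delta\Delta=0$, and $\Delta_{ij}=0$ unless $i<j$ and $(i,j)\in\bigcup_{k=1}^bJ_{k-1}\times J_k$. For $1\le r\le m-1$ the $r$-th diagonal is $\{(j-r,j):r<j\le m\}$. Row Cancellation Algorithm (RCA) applied to a connection matrix $\Delta$: set $\widetilde\Delta^0=\widetilde\Delta^1=\Delta$. For $r=1,\dots,m-1$ in turn: (Markup) mark permanently as a primary pivot every position $(j-r,j)$ on the $r$-th diagonal with $\widetilde\Delta^r_{j-r,j}\ne0$ such that no position of column $j$ was marked as a primary pivot at an earlier iteration. (Update, only for $r\le m-2$) If no position was marked at iteration $r$, put $\widetilde T^r=I$; otherwise let $j_1<\cdots<j_t$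 be the columns of the positions marked at iteration $r$, let $\widetilde T^{r,s}=I-\sum_{q=j_s+1}^m\frac{\widetilde\Delta^r_{j_s-r,q}}{\widetilde\Delta^r_{j_s-r,j_s}}U^{j_sq}$ and $\widetilde T^r=\widetilde T^{r,1}\cdots\widetilde T^{r,t}$. Set $\widetilde\Delta^{r+1}=(\widetilde T^r)^{-1}\widetilde\Delta^r\widetilde T^r$. *)

theory Defs
  imports "Jordan_Normal_Form.Gauss_Jordan_Elimination"
begin

text \<open>Matrices are Jordan_Normal_Form matrices; indices are 0-based, so the paper's
  position (i,j) with 1 \<le> i,j \<le> m corresponds to (i-1,j-1) here.
  The partition J_0,...,J_b is encoded by a block function blk with
  J_k = {i < m. blk i = k}.\<close>

definition connection_matrix :: "nat \<Rightarrow> 'a::field mat \<Rightarrow> (nat \<Rightarrow> nat) \<Rightarrow> nat \<Rightarrow> bool" where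
  "connection_matrix m D blk b \<longleftrightarrow>
     D \<in> carrier_mat m m \<and>
     (\<forall>i<m. blk i \<le> b) \<and> (\<forall>k\<le>b. \<exists>i<m. blk i = k) \<and>
     upper_triangular D \<and>
     D * D = 0\<^sub>m m m \<and>
     (\<forall>i<m. \<forall>j<m. D $$ (i, j) \<noteq> 0 \<longrightarrow>
        i < j \<and> (\<exists>k\<in>{1..b}. blk i = k - 1 \<and> blk j = k))"

text \<open>The r-th diagonal consists of the (0-based) positions (j-r, j) with r \<le> j < m.\<close>
definition rca_new_pivots :: "nat \<Rightarrow> 'a::field mat \<Rightarrow> nat set \<Rightarrow> nat \<Rightarrow> nat set" where
  "rca_new_pivots m D P r = {j. r \<le> j \<and> j < m \<and> j \<notin> P \<and> D $$ (j - r, j) \<noteq> 0}"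

definition rca_T_single :: "nat \<Rightarrow> 'a::field mat \<Rightarrow> nat \<Rightarrow> nat \<Rightarrow> 'a mat" where
  "rca_T_single m D r j = mat m m (\<lambda>(i, q).
      (if i = q then 1 else 0) -
      (if i = j \<and> j < q then D $$ (j - r, q) / D $$ (j - r, j) else 0))"

definition rca_T :: "nat \<Rightarrow> 'a::field mat \<Rightarrow> nat set \<Rightarrow> nat \<Rightarrow> 'a mat" where
  "rca_T m D N r = foldr (\<lambda>j A. rca_T_single m D r j * A) (sorted_list_of_set N) (1\<^sub>m m)"

text \<open>rca_state m D k = (matrix tilde-Delta^{k+1}, set of columns marked at iterations 1..k).\<close>
fun rca_state :: "nat \<Rightarrow> 'a::field mat \<Rightarrow> nat \<Rightarrow> 'a mat \<times> nat set" where
  "rca_state m D 0 = (D, {})"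
| "rca_state m D (Suc k) =
     (let (A, P) = rca_state m D k;
          N = rca_new_pivots m A P (Suc k);
          T = rca_T m A N (Suc k)
      in (the (mat_inverse T) * A * T, P \<union> N))"

text \<open>The last matrix tilde-Delta^{m-1} produced by the RCA (for m = 1 this is Delta).\<close>
definition rca_last :: "nat \<Rightarrow> 'a::field mat \<Rightarrow> 'a mat" where
  "rca_last m D = fst (rca_state m D (m - 2))"

end

theory Submission
  imports Defs "Jordan_Normal_Form.Determinant"
begin

text \<open>
  Write A for the current matrix of the Row Cancellation Algorithm (RCA) before
  iteration r and P for the set of columns marked so far.  By induction on the iterations we
  show the invariant \<open>rca_invariant m A P r\<close>: A is m \<times> m with A * A = 0, every unmarked
  column j vanishes in all rows i with j - i < r (diagonals 0, ..., r - 1), and every marked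
  column j has a zero j-th row.  After the last update r = m - 1, so an unmarked column j can
  only carry the single entry (0, m - 1) (0-based indices); expanding (A * A)(0, k) = 0 then shows
  A(0, j) * A(j, k) = 0, while marked columns have zero rows anyway.
\<close>

lemma mult_mat_entry:
  assumes "A \<in> carrier_mat n n" "B \<in> carrier_mat n n" "i < n" "k < n"
  shows "(A * B) $$ (i, k) = (\<Sum>l<n. A $$ (i, l) * B $$ (l, k))"
  using assms by (simp add: scalar_prod_def lessThan_atLeast0)

text \<open>If all but the j-th summand of an entry of A * B vanish, the entry is that summand.
  This is how all the vanishing statements below are derived from A * A = 0.\<close>

lemma mult_mat_entry_single_term:
  assumes A: "A \<in> carrier_mat n n" and B: "B \<in> carrier_mat n n"
    and ik: "i < n" "k < n" and j: "j < n"
    and others: "\<And>l. l < n \<Longrightarrow> l \<noteq> j \<Longrightarrow> A $$ (i, l) * B $$ (l, k) = 0"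
  shows "(A * B) $$ (i, k) = A $$ (i, j) * B $$ (j, k)"
proof -
  have "(\<Sum>l<n. A $$ (i, l) * B $$ (l, k)) = (\<Sum>l\<in>{j}. A $$ (i, l) * B $$ (l, k))"
    using j others by (intro sum.mono_neutral_right) auto
  then show ?thesis using mult_mat_entry[OF A B ik] by simp
qed

definition unit_upper_on :: "nat \<Rightarrow> nat set \<Rightarrow> 'a::{zero,one} mat \<Rightarrow> bool" where
  "unit_upper_on n S T \<longleftrightarrow> T \<in> carrier_mat n n \<and>
     (\<forall>l<n. \<forall>q<n. (l \<notin> S \<or> q \<le> l) \<longrightarrow> T $$ (l, q) = (if l = q then 1 else 0))"

lemma unit_upper_onD:
  assumes "unit_upper_on n S T" "l < n" "q < n" "l \<notin> S \<or> q \<le> l"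
  shows "T $$ (l, q) = (if l = q then 1 else 0)"
  using assms unfolding unit_upper_on_def by blast

lemma unit_upper_on_carrier: "unit_upper_on n S T \<Longrightarrow> T \<in> carrier_mat n n"
  unfolding unit_upper_on_def by blast

lemma unit_upper_on_mult_row:
  fixes T U :: "'a::semiring_1 mat"
  assumes T: "unit_upper_on n S T" and U: "U \<in> carrier_mat n n" and lq: "l < n" "q < n"
    and row: "l \<notin> S \<or> (q \<le> l \<and> (\<forall>k<n. l < k \<longrightarrow> U $$ (k, q) = 0))"
  shows "(T * U) $$ (l, q) = U $$ (l, q)"
proof -
  have "(T * U) $$ (l, q) = T $$ (l, l) * U $$ (l, q)"
  proof (rule mult_mat_entry_single_term[OF unit_upper_on_carrier[OF T] U lq lq(1)])
    fix k assume k: "k < n" "k \<noteq> l"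
    show "T $$ (l, k) * U $$ (k, q) = 0"
    proof (cases "k < l \<or> l \<notin> S")
      case True
      then show ?thesis using unit_upper_onD[OF T lq(1) k(1)] k(2) by auto
    next
      case False
      then show ?thesis using row k by auto
    qed
  qed
  then show ?thesis using unit_upper_onD[OF T lq(1) lq(1)] by simp
qed

lemma unit_upper_on_mult:
  fixes T U :: "'a::semiring_1 mat"
  assumes T: "unit_upper_on n S T" and U: "unit_upper_on n S' U"
  shows "unit_upper_on n (S \<union> S') (T * U)"
  unfolding unit_upper_on_def
proof (intro conjI allI impI)
  show "T * U \<in> carrier_mat n n"
    using unit_upper_on_carrier[OF T] unit_upper_on_carrier[OF U] by simp
next
  fix l q assume lq: "l < n" "q < n" and row: "l \<notin> S \<union> S' \<or> q \<le> l"
  have "\<forall>k<n. l < k \<longrightarrow> U $$ (k, q) = 0" if "q \<le> l"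
    using unit_upper_onD[OF U _ lq(2)] that by auto
  then have "(T * U) $$ (l, q) = U $$ (l, q)"
    using unit_upper_on_mult_row[OF T unit_upper_on_carrier[OF U] lq] row by blast
  also have "\<dots> = (if l = q then 1 else 0)" using unit_upper_onD[OF U lq] row by blast
  finally show "(T * U) $$ (l, q) = (if l = q then 1 else 0)" .
qed

text \<open>A right inverse has the same shape: the strictly lower part vanishes by downward
  induction on the row index, and then T * Ti = 1 can be read off row by row.\<close>

lemma unit_upper_on_right_inverse:
  fixes T Ti :: "'a::semiring_1 mat"
  assumes T: "unit_upper_on n S T" and Ti: "Ti \<in> carrier_mat n n" and inv: "T * Ti = 1\<^sub>m n"
  shows "unit_upper_on n S Ti"
proof -
  have lower: "Ti $$ (k, q) = 0" if "k < n" "q < k" for k q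
    using that
  proof (induction "n - k" arbitrary: k rule: less_induct)
    case less
    have "\<forall>k'<n. k < k' \<longrightarrow> Ti $$ (k', q) = 0"
      using less.hyps less.prems by auto
    then have "(T * Ti) $$ (k, q) = Ti $$ (k, q)"
      using unit_upper_on_mult_row[OF T Ti less.prems(1)] less.prems by auto
    then show ?case using inv less.prems by simp
  qed
  show ?thesis
    unfolding unit_upper_on_def
  proof (intro conjI allI impI Ti)
    fix l q assume lq: "l < n" "q < n" and row: "l \<notin> S \<or> q \<le> l"
    have "(T * Ti) $$ (l, q) = Ti $$ (l, q)"
      using unit_upper_on_mult_row[OF T Ti lq] row lower lq by auto
    then show "Ti $$ (l, q) = (if l = q then 1 else 0)" using inv lq by simp
  qed
qed

text \<open>Such a matrix has determinant 1, hence \<open>mat_inverse\<close> succeeds, with an inverse of the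
  same shape.\<close>

lemma unit_upper_on_invertible:
  fixes T :: "'a::field mat"
  assumes T: "unit_upper_on n S T"
  obtains Ti where "mat_inverse T = Some Ti" "T * Ti = 1\<^sub>m n" "unit_upper_on n S Ti"
proof -
  have carrier: "T \<in> carrier_mat n n" using unit_upper_on_carrier[OF T] .
  have "upper_triangular T"
    using unit_upper_onD[OF T] carrier by (intro upper_triangularI) auto
  then have "det T = (\<Prod>i = 0..<n. T $$ (i, i))"
    using det_upper_triangular[OF _ carrier] carrier by (simp add: prod_list_diag_prod)
  also have "\<dots> = 1" using unit_upper_onD[OF T] by simp
  finally have "T \<in> Units (ring_mat TYPE('a) n n)"
    using det_non_zero_imp_unit[OF carrier] by simp
  then obtain Ti where Ti: "mat_inverse T = Some Ti"
    using mat_inverse(1)[OF carrier, of n] by (cases "mat_inverse T") auto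
  have "T * Ti = 1\<^sub>m n" "Ti \<in> carrier_mat n n" using mat_inverse(2)[OF carrier Ti] by auto
  then show ?thesis using that Ti unit_upper_on_right_inverse[OF T] by blast
qed

lemma unit_upper_on_rca_T_single: "unit_upper_on m {j} (rca_T_single m A r j)"
  by (auto simp: unit_upper_on_def rca_T_single_def)

definition pivot_transform :: "nat \<Rightarrow> 'a::field mat \<Rightarrow> nat \<Rightarrow> nat list \<Rightarrow> 'a mat" where
  "pivot_transform m A r js = foldr (\<lambda>j M. rca_T_single m A r j * M) js (1\<^sub>m m)"

lemma rca_T_pivot_transform: "rca_T m A N r = pivot_transform m A r (sorted_list_of_set N)"
  by (simp add: rca_T_def pivot_transform_def)

lemma unit_upper_on_pivot_transform: "unit_upper_on m (set js) (pivot_transform m A r js)"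
proof (induction js)
  case Nil
  then show ?case by (simp add: pivot_transform_def unit_upper_on_def)
next
  case (Cons j js)
  then show ?case
    using unit_upper_on_mult[OF unit_upper_on_rca_T_single] by (simp add: pivot_transform_def)
qed

text \<open>Right multiplication by T^{r,s} with pivot (j - r, j) subtracts multiples of column j
  from the columns to the right of j, chosen to cancel row j - r there.\<close>

lemma mult_rca_T_single_entry:
  fixes A :: "'a::field mat"
  assumes A: "A \<in> carrier_mat m m" and "p < m" "l < m" "j < m"
  shows "(A * rca_T_single m A r j) $$ (p, l) =
    A $$ (p, l) - (if j < l then A $$ (p, j) * (A $$ (j - r, l) / A $$ (j - r, j)) else 0)"
proof -
  have "(A * rca_T_single m A r j) $$ (p, l) = (\<Sum>k<m. (if k = l then A $$ (p, k) else 0) -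
      (if k = j then A $$ (p, k) * (if j < l then A $$ (j - r, l) / A $$ (j - r, j) else 0) else 0))"
    unfolding mult_mat_entry[OF A unit_upper_on_carrier[OF unit_upper_on_rca_T_single] assms(2,3)]
    using assms by (auto simp: rca_T_single_def right_diff_distrib intro!: sum.cong)
  then show ?thesis using assms by (simp add: sum_subtractf)
qed

lemma mult_mat_row_cong:
  assumes "X \<in> carrier_mat n n" "Y \<in> carrier_mat n n" "U \<in> carrier_mat n n" "p < n" "q < n"
    and "\<And>l. l < n \<Longrightarrow> X $$ (p, l) = Y $$ (p, l)"
  shows "(X * U) $$ (p, q) = (Y * U) $$ (p, q)"
  using assms(6) by (simp add: mult_mat_entry[OF assms(1,3-5)] mult_mat_entry[OF assms(2-5)])

text \<open>The later factors only combine columns right of their own pivot,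
  and the earlier factors do not touch a pivot row, since it is zero in their pivot columns.\<close>

lemma pivot_transform_clears_rows:
  fixes A :: "'a::field mat"
  assumes A: "A \<in> carrier_mat m m"
    and "sorted_wrt (<) js"
    and "\<forall>j\<in>set js. r \<le> j \<and> j < m \<and> A $$ (j - r, j) \<noteq> 0"
    and "\<forall>j\<in>set js. \<forall>j'\<in>set js. j' < j \<longrightarrow> A $$ (j - r, j') = 0"
    and "j \<in> set js" "q < m" "j < q"
  shows "(A * pivot_transform m A r js) $$ (j - r, q) = 0"
  using assms(2-)
proof (induction js arbitrary: j)
  case Nil
  then show ?case by simp
next
  case (Cons j0 js)
  let ?S = "rca_T_single m A r j0" and ?U = "pivot_transform m A r js"
  have S: "?S \<in> carrier_mat m m" using unit_upper_on_carrier[OF unit_upper_on_rca_T_single] .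
  have U: "unit_upper_on m (set js) ?U" by (rule unit_upper_on_pivot_transform)
  have U_carrier: "?U \<in> carrier_mat m m" using unit_upper_on_carrier[OF U] .
  have j0: "r \<le> j0" "j0 < m" "A $$ (j0 - r, j0) \<noteq> 0" using Cons.prems(2) by auto
  have later: "j0 < l" if "l \<in> set js" for l using Cons.prems(1) that by simp
  have split: "A * pivot_transform m A r (j0 # js) = (A * ?S) * ?U"
    using assoc_mult_mat[OF A S U_carrier] by (simp add: pivot_transform_def)
  have p: "j - r < m" using Cons.prems(2,4) by auto
  show ?case
  proof (cases "j = j0")
    case True
    have cleared: "(A * ?S) $$ (j0 - r, l) = 0" if "l < m" "j0 < l" for l
      using mult_rca_T_single_entry[OF A _ that(1) j0(2)] j0 that by simp
    have "((A * ?S) * ?U) $$ (j0 - r, q) = (A * ?S) $$ (j0 - r, q) * ?U $$ (q, q)"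
    proof (rule mult_mat_entry_single_term[OF _ U_carrier _ \<open>q < m\<close> \<open>q < m\<close>])
      fix l assume l: "l < m" "l \<noteq> q"
      show "(A * ?S) $$ (j0 - r, l) * ?U $$ (l, q) = 0"
        using cleared[OF l(1)] later unit_upper_onD[OF U l(1) \<open>q < m\<close>] l(2) by auto
    qed (use A S j0 in auto)
    then show ?thesis using True split cleared Cons.prems(5,6) by simp
  next
    case False
    then have j: "j \<in> set js" using Cons.prems(4) by simp
    have "A $$ (j - r, j0) = 0"
      using Cons.prems(3) j later[OF j] by (meson list.set_intros)
    then have "(A * ?S) $$ (j - r, l) = A $$ (j - r, l)" if "l < m" for l
      using mult_rca_T_single_entry[OF A p that j0(2)] by simp
    then have "((A * ?S) * ?U) $$ (j - r, q) = (A * ?U) $$ (j - r, q)"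
      using mult_mat_row_cong[OF mult_carrier_mat[OF A S] A U_carrier p \<open>q < m\<close>] by blast
    also have "\<dots> = 0"
    proof (rule Cons.IH[OF _ _ _ j Cons.prems(5,6)])
      show "sorted_wrt (<) js" using Cons.prems(1) by simp
      show "\<forall>j\<in>set js. r \<le> j \<and> j < m \<and> A $$ (j - r, j) \<noteq> 0" using Cons.prems(2) by simp
      show "\<forall>j\<in>set js. \<forall>j'\<in>set js. j' < j \<longrightarrow> A $$ (j - r, j') = 0"
        using Cons.prems(3) by simp
    qed
    finally show ?thesis using split by simp
  qed
qed

definition rca_invariant :: "nat \<Rightarrow> 'a::field mat \<Rightarrow> nat set \<Rightarrow> nat \<Rightarrow> bool" where
  "rca_invariant m A P r \<longleftrightarrow> A \<in> carrier_mat m m \<and> A * A = 0\<^sub>m m m \<and> P \<subseteq> {..<m} \<and>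
     (\<forall>i<m. \<forall>j<m. j \<notin> P \<longrightarrow> j < i + r \<longrightarrow> A $$ (i, j) = 0) \<and>
     (\<forall>j\<in>P. \<forall>k<m. A $$ (j, k) = 0)"

text \<open>A connection matrix is strictly upper triangular with square zero, which is the
  invariant before the first iteration.\<close>

lemma connection_matrix_rca_invariant:
  assumes "connection_matrix m D blk b"
  shows "rca_invariant m D {} 1"
  using assms unfolding connection_matrix_def rca_invariant_def
  by (metis empty_iff empty_subsetI less_Suc_eq_le not_le Suc_eq_plus1)

locale rca_iteration =
  fixes m :: nat and A :: "'a::field mat" and P :: "nat set" and r :: nat
  assumes invariant: "rca_invariant m A P r"
begin

abbreviation N :: "nat set" where "N \<equiv> rca_new_pivots m A P r"
abbreviation T :: "'a mat" where "T \<equiv> rca_T m A N r"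
abbreviation Ti :: "'a mat" where "Ti \<equiv> the (mat_inverse T)"
abbreviation B :: "'a mat" where "B \<equiv> A * T"
abbreviation A' :: "'a mat" where "A' \<equiv> Ti * A * T"

lemma A_carrier: "A \<in> carrier_mat m m"
  and A_square_zero: "A * A = 0\<^sub>m m m"
  and P_bound: "P \<subseteq> {..<m}"
  and unmarked_zero: "\<lbrakk>i < m; j < m; j \<notin> P; j < i + r\<rbrakk> \<Longrightarrow> A $$ (i, j) = 0"
  and marked_row_zero: "\<lbrakk>j \<in> P; k < m\<rbrakk> \<Longrightarrow> A $$ (j, k) = 0"
  using invariant unfolding rca_invariant_def by blast+

lemma new_pivot_iff: "j \<in> N \<longleftrightarrow> r \<le> j \<and> j < m \<and> j \<notin> P \<and> A $$ (j - r, j) \<noteq> 0"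
  by (simp add: rca_new_pivots_def)

lemma N_bound: "N \<subseteq> {..<m}"
  by (auto simp: rca_new_pivots_def)

lemma N_finite: "finite N"
  using N_bound finite_subset by blast

lemma T_unit_upper: "unit_upper_on m N T"
  using N_finite unit_upper_on_pivot_transform[of m "sorted_list_of_set N" A r]
  by (simp add: rca_T_pivot_transform)

lemma T_carrier: "T \<in> carrier_mat m m"
  using unit_upper_on_carrier[OF T_unit_upper] .

lemma Ti_inverse: "T * Ti = 1\<^sub>m m" and Ti_unit_upper: "unit_upper_on m N Ti"
  using unit_upper_on_invertible[OF T_unit_upper] by (metis option.sel)+

lemma Ti_carrier: "Ti \<in> carrier_mat m m"
  using unit_upper_on_carrier[OF Ti_unit_upper] .

text \<open>The row of a new pivot is not itself a new pivot column: otherwise the two pivots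
  would give a nonzero entry of A * A.\<close>

lemma pivot_row_not_new_pivot:
  assumes "j \<in> N"
  shows "j - r \<notin> N"
proof
  let ?p = "j - r"
  assume "?p \<in> N"
  then have p: "r \<le> ?p" "?p \<notin> P" "A $$ (?p - r, ?p) \<noteq> 0" using new_pivot_iff by auto
  have j: "r \<le> j" "j < m" "j \<notin> P" "A $$ (?p, j) \<noteq> 0" using assms new_pivot_iff by auto
  have "(A * A) $$ (?p - r, j) = A $$ (?p - r, ?p) * A $$ (?p, j)"
  proof (rule mult_mat_entry_single_term[OF A_carrier A_carrier _ j(2)])
    fix l assume l: "l < m" "l \<noteq> ?p"
    show "A $$ (?p - r, l) * A $$ (l, j) = 0"
    proof -
      consider "l \<in> P" | "l \<notin> P" "l < ?p" | "?p < l" using l(2) by linarith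
      then show ?thesis
      proof cases
        case 1
        then show ?thesis using marked_row_zero[OF _ j(2)] by simp
      next
        case 2
        then show ?thesis using unmarked_zero[of "?p - r" l] l(1) p(1) j(2) by simp
      next
        case 3
        then show ?thesis using unmarked_zero[OF l(1) j(2,3)] j(1) by simp
      qed
    qed
  qed (use j in auto)
  then show False using A_square_zero p(3) j by simp
qed

lemma B_carrier: "B \<in> carrier_mat m m"
  using A_carrier T_carrier by simp

lemma B_column_unchanged:
  assumes i: "i < m" and q: "q < m" and left: "\<forall>l\<in>N. l < q \<longrightarrow> A $$ (i, l) = 0"
  shows "B $$ (i, q) = A $$ (i, q)"
proof -
  have "B $$ (i, q) = A $$ (i, q) * T $$ (q, q)"
  proof (rule mult_mat_entry_single_term[OF A_carrier T_carrier i q q])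
    fix l assume l: "l < m" "l \<noteq> q"
    show "A $$ (i, l) * T $$ (l, q) = 0"
      using left unit_upper_onD[OF T_unit_upper l(1) q] l(2) by (cases "l \<in> N \<and> l < q") auto
  qed
  then show ?thesis using unit_upper_onD[OF T_unit_upper q q] by simp
qed

lemma B_pivot_row_left:
  assumes "j \<in> N" "l < m" "l \<le> j"
  shows "B $$ (j - r, l) = A $$ (j - r, l)"
  using assms new_pivot_iff unmarked_zero by (intro B_column_unchanged) auto

lemma B_pivot_row_cleared:
  assumes "j \<in> N" "q < m" "j < q"
  shows "B $$ (j - r, q) = 0"
  unfolding rca_T_pivot_transform
proof (rule pivot_transform_clears_rows[OF A_carrier])
  show "\<forall>j\<in>set (sorted_list_of_set N). \<forall>j'\<in>set (sorted_list_of_set N).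
      j' < j \<longrightarrow> A $$ (j - r, j') = 0"
    using N_finite new_pivot_iff unmarked_zero by auto
qed (use assms N_finite new_pivot_iff in auto)

lemma A'_eq: "A' = Ti * B"
  using assoc_mult_mat[OF Ti_carrier A_carrier T_carrier] by simp

lemma A'_carrier: "A' \<in> carrier_mat m m"
  using Ti_carrier B_carrier A'_eq by simp

lemma A'_square_zero: "A' * A' = 0\<^sub>m m m"
proof -
  have "A' * A' = Ti * (A * ((T * Ti) * (A * T)))"
    using A_carrier T_carrier Ti_carrier by (simp add: A'_eq assoc_mult_mat[of _ m m _ m _ m])
  also have "\<dots> = Ti * ((A * A) * T)"
    using A_carrier T_carrier by (simp add: Ti_inverse assoc_mult_mat[of _ m m _ m _ m])
  finally show ?thesis using A_square_zero Ti_carrier T_carrier by simp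
qed

lemma A'_row_outside: "\<lbrakk>i < m; q < m; i \<notin> N\<rbrakk> \<Longrightarrow> A' $$ (i, q) = B $$ (i, q)"
  unfolding A'_eq using unit_upper_on_mult_row[OF Ti_unit_upper B_carrier] by blast

lemma A'_column_zero:
  assumes i: "i < m" and q: "q < m" and below: "\<And>k. k < m \<Longrightarrow> i \<le> k \<Longrightarrow> B $$ (k, q) = 0"
  shows "A' $$ (i, q) = 0"
proof -
  have "Ti $$ (i, k) * B $$ (k, q) = 0" if "k < m" for k
    using below[OF that] unit_upper_onD[OF Ti_unit_upper i that] by (cases "i \<le> k") auto
  then have "(\<Sum>k<m. Ti $$ (i, k) * B $$ (k, q)) = 0" by (intro sum.neutral) simp
  then show ?thesis unfolding A'_eq mult_mat_entry[OF Ti_carrier B_carrier i q] .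
qed

text \<open>Unmarked columns now vanish on diagonal r as well: the only entry there, (j - r, j), is
  zero because j was not marked.\<close>

lemma A'_unmarked_zero:
  assumes i: "i < m" and j: "j < m" "j \<notin> P \<union> N" "j < i + Suc r"
  shows "A' $$ (i, j) = 0"
proof (rule A'_column_zero[OF i j(1)])
  fix k assume k: "k < m" "i \<le> k"
  have "B $$ (k, j) = A $$ (k, j)"
    using k j new_pivot_iff unmarked_zero by (intro B_column_unchanged) auto
  also have "\<dots> = 0"
  proof (cases "j < k + r")
    case True
    then show ?thesis using unmarked_zero[OF k(1) j(1)] j(2) by simp
  next
    case False
    then have "j = k + r" using j(3) k(2) by linarith
    then show ?thesis using j(1,2) new_pivot_iff[of j] by auto
  qed
  finally show "B $$ (k, j) = 0" .
qed

lemma A'_marked_row_zero: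
  assumes j: "j \<in> P" and k: "k < m"
  shows "A' $$ (j, k) = 0"
proof -
  have jm: "j < m" using j P_bound by auto
  have "B $$ (j, k) = 0"
    using marked_row_zero[OF j] by (simp add: mult_mat_entry[OF A_carrier T_carrier jm k])
  then show ?thesis using A'_row_outside[OF jm k] j new_pivot_iff by auto
qed

text \<open>Rows of new pivot columns become zero: row j - r of A' is zero except for the pivot
  entry (j - r, j) and entries in columns whose rows vanish, so A' * A' = 0 forces row j of
  A' to vanish.\<close>

lemma A'_new_pivot_row_zero:
  assumes j: "j \<in> N" and k: "k < m"
  shows "A' $$ (j, k) = 0"
proof -
  let ?p = "j - r"
  have jm: "j < m" "j \<notin> P" "A $$ (?p, j) \<noteq> 0" and p: "?p < m" and jr: "r \<le> j"
    using j new_pivot_iff[of j] by auto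
  have row_p: "A' $$ (?p, l) = B $$ (?p, l)" if "l < m" for l
    using A'_row_outside[OF p that pivot_row_not_new_pivot[OF j]] .
  have "(A' * A') $$ (?p, k) = A' $$ (?p, j) * A' $$ (j, k)"
  proof (rule mult_mat_entry_single_term[OF A'_carrier A'_carrier p k jm(1)])
    fix l assume l: "l < m" "l \<noteq> j"
    show "A' $$ (?p, l) * A' $$ (l, k) = 0"
    proof (cases "l \<in> P \<or> j < l")
      case True
      then show ?thesis
        using A'_marked_row_zero[OF _ k] row_p[OF l(1)] B_pivot_row_cleared[OF j l(1)] by auto
    next
      case False
      then have "A' $$ (?p, l) = A $$ (?p, l)"
        using row_p[OF l(1)] B_pivot_row_left[OF j l(1)] by simp
      also have "\<dots> = 0" using unmarked_zero[OF p l(1)] False l(2) jr by simp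
      finally show ?thesis by simp
    qed
  qed
  moreover have "A' $$ (?p, j) = A $$ (?p, j)"
    using row_p[OF jm(1)] B_pivot_row_left[OF j jm(1)] by simp
  ultimately show ?thesis using A'_square_zero p k jm(3) by simp
qed

theorem iteration_invariant: "rca_invariant m A' (P \<union> N) (Suc r)"
  unfolding rca_invariant_def
proof (intro conjI A'_carrier A'_square_zero allI impI ballI)
  show "P \<union> N \<subseteq> {..<m}" using P_bound N_bound by simp
next
  fix i j assume "i < m" "j < m" "j \<notin> P \<union> N" "j < i + Suc r"
  then show "A' $$ (i, j) = 0" by (rule A'_unmarked_zero)
next
  fix j k assume "j \<in> P \<union> N" "k < m"
  then show "A' $$ (j, k) = 0" using A'_marked_row_zero A'_new_pivot_row_zero by blast
qed

end

lemma rca_state_invariant: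
  assumes "rca_invariant m D {} 1"
  shows "rca_invariant m (fst (rca_state m D k)) (snd (rca_state m D k)) (Suc k)"
proof (induction k)
  case 0
  then show ?case using assms by simp
next
  case (Suc k)
  obtain A P where state: "rca_state m D k = (A, P)" by fastforce
  interpret rca_iteration m A P "Suc k"
    using Suc state by unfold_locales simp
  show ?case using iteration_invariant by (simp add: state Let_def)
qed

text \<open>Once r \<ge> m - 1, the invariant alone yields the claim: either column j is marked and
  row j vanishes, or column j has at most the entry (0, m - 1) and the expansion of
  (A * A)(i, k) = 0 has a single nonzero summand.\<close>

lemma rca_invariant_outer_product_zero:
  assumes inv: "rca_invariant m A P r" and size: "m \<le> Suc r"
    and i: "i < m" and j: "j < m" and k: "k < m"
  shows "A $$ (i, j) * A $$ (j, k) = 0"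
proof -
  interpret rca_iteration m A P r by (rule rca_iteration.intro[OF inv])
  show ?thesis
  proof (cases "j \<in> P \<or> A $$ (i, j) = 0")
    case True
    then show ?thesis using marked_row_zero[OF _ k] by auto
  next
    case False
    then have "j = i + r" using unmarked_zero[OF i j] j size by fastforce
    then have left: "l < i + r" if "l < m" "l \<noteq> j" for l
      using that size by linarith
    have "(A * A) $$ (i, k) = A $$ (i, j) * A $$ (j, k)"
    proof (rule mult_mat_entry_single_term[OF A_carrier A_carrier i k j])
      fix l assume l: "l < m" "l \<noteq> j"
      show "A $$ (i, l) * A $$ (l, k) = 0"
        using marked_row_zero[OF _ k] unmarked_zero[OF i l(1) _ left[OF l]]
        by (cases "l \<in> P") auto
    qed
    then show ?thesis using A_square_zero i k by simp
  qed
qed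

theorem mainTheorem12:
  fixes D :: "'a::field mat" and m b :: nat and blk :: "nat \<Rightarrow> nat"
  assumes "m \<ge> 1"
    and "connection_matrix m D blk b"
  shows "\<forall>j<m. \<forall>i<m. \<forall>k<m. rca_last m D $$ (i, j) * rca_last m D $$ (j, k) = 0"
proof (intro allI impI)
  fix j i k assume "j < m" "i < m" "k < m"
  have "rca_invariant m (rca_last m D) (snd (rca_state m D (m - 2))) (Suc (m - 2))"
    unfolding rca_last_def
    by (rule rca_state_invariant[OF connection_matrix_rca_invariant[OF assms(2)]])
  moreover have "m \<le> Suc (Suc (m - 2))" by simp
  ultimately show "rca_last m D $$ (i, j) * rca_last m D $$ (j, k) = 0"
    using rca_invariant_outer_product_zero \<open>j < m\<close> \<open>i < m\<close> \<open>k < m\<close> by blast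
qed

end
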